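(* Let $S\subseteq N$ be an $n$-switchable set and let $T_1,\dots,T_l$ be its equivalence classes for the relation of being connected in $S$. Then: (1) each $T_i$ is of the form $T_i=T_{i1}\times\cdots\times T_{in}$ for some subsets $T_{ij}\subseteq[r_j]$; (2) if $a\in T_i$, $b\in N$, $j\in[n]$ and ${\rm s}(j,a,b)\in S$, then ${\rm s}(j,a,b)\in T_i$; (3) if $i\neq j$ in $[l]$, there exist distinct $p_1,\dots,p_m\in[n]$ with $m\ge 3$ such that $T_{ip_k}\cap T_{jp_k}=\emptyset$ for all $k=1,\dots,m$.
   Context: Fix positive integers $n, r_1,\dots,r_n$ and let $N=[r_1]\times\cdots\times[r_n]$. For $a,b\in N$ and $i\in[n]$, ${\rm s}(i,a,b)\in N$ has $i$-th component $b_i$ and other components equal to those of $a$. Let $d(a,b)=\#\{j: a_j\neq b_j\}$. A subset $S\subseteq N$ is $n$-switchable if for all $a,b\in S$ with $d(a,b)=2$ and all $i\in[n]$, ${\rm s}(i,a,b)\in S$. Elements $a,b\in S$ are connected in $S$ if there are $a_0=a,\dots,a_k=b$ in $S$ with $d(a_{j-1},a_j)\le 1$ for all $j$. *)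

theory Defs
  imports "HOL-Library.FuncSet"
begin

definition grid :: "nat \<Rightarrow> (nat \<Rightarrow> nat) \<Rightarrow> (nat \<Rightarrow> nat) set" where
  "grid n r = PiE {1..n} (\<lambda>i. {1..r i})"

definition sw :: "nat \<Rightarrow> (nat \<Rightarrow> nat) \<Rightarrow> (nat \<Rightarrow> nat) \<Rightarrow> (nat \<Rightarrow> nat)" where
  "sw i a b = a(i := b i)"

definition hdist :: "nat \<Rightarrow> (nat \<Rightarrow> nat) \<Rightarrow> (nat \<Rightarrow> nat) \<Rightarrow> nat" where
  "hdist n a b = card {j \<in> {1..n}. a j \<noteq> b j}"

definition switchable :: "nat \<Rightarrow> (nat \<Rightarrow> nat) \<Rightarrow> (nat \<Rightarrow> nat) set \<Rightarrow> bool" where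
  "switchable n r S \<longleftrightarrow> S \<subseteq> grid n r \<and>
     (\<forall>a\<in>S. \<forall>b\<in>S. hdist n a b = 2 \<longrightarrow> (\<forall>i\<in>{1..n}. sw i a b \<in> S))"

definition conn_in :: "nat \<Rightarrow> (nat \<Rightarrow> nat) set \<Rightarrow> (nat \<Rightarrow> nat) \<Rightarrow> (nat \<Rightarrow> nat) \<Rightarrow> bool" where
  "conn_in n S a b \<longleftrightarrow> (\<exists>(k::nat) (f::nat \<Rightarrow> nat \<Rightarrow> nat). f 0 = a \<and> f k = b \<and> (\<forall>j\<le>k. f j \<in> S) \<and>
      (\<forall>j\<in>{1..k}. hdist n (f (j - 1)) (f j) \<le> 1))"

definition conn_classes :: "nat \<Rightarrow> (nat \<Rightarrow> nat) set \<Rightarrow> (nat \<Rightarrow> nat) set set" where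
  "conn_classes n S = S // {(a, b). conn_in n S a b}"

end

theory Submission
  imports Defs
begin

text \<open>Call two points of S adjacent if they differ in at most one coordinate; the classes
  are the components of this adjacency graph. The key fact is that if a and b lie in one
  component, then S contains the whole subcube of points whose coordinates are taken from a
  or from b. This is proved along a path from a to b: when the endpoint changes one
  coordinate q, the points of the new subcube carrying the new value at q are reached by
  switching, restoring the other coordinates one at a time. Hence a component is closed
  under importing single coordinates of its members, which makes it the product of its
  coordinate projections. If two components had disjoint projections in at most two
  coordinates, points of them differing exactly there would be adjacent or, by switching,
  yield a point of the first component sharing a coordinate value with the second.\<close>

definition grid_step :: "nat \<Rightarrow> (nat \<Rightarrow> nat) set \<Rightarrow> (nat \<Rightarrow> nat) \<Rightarrow> (nat \<Rightarrow> nat) \<Rightarrow> bool" where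
  "grid_step n S x y \<longleftrightarrow> x \<in> S \<and> y \<in> S \<and> hdist n x y \<le> 1"

definition component :: "nat \<Rightarrow> (nat \<Rightarrow> nat) set \<Rightarrow> (nat \<Rightarrow> nat) \<Rightarrow> (nat \<Rightarrow> nat) set" where
  "component n S a = {b. (grid_step n S)\<^sup>*\<^sup>* a b}"

definition box :: "nat \<Rightarrow> (nat \<Rightarrow> nat) \<Rightarrow> (nat \<Rightarrow> nat) \<Rightarrow> (nat \<Rightarrow> nat) set" where
  "box n x y = {z \<in> extensional {1..n}. \<forall>j\<in>{1..n}. z j = x j \<or> z j = y j}"

lemma hdist_commute: "hdist n a b = hdist n b a"
  unfolding hdist_def by metis

lemma hdist_fun_upd_le_1: "hdist n x (x(q := v)) \<le> 1"
proof -
  have "{j \<in> {1..n}. x j \<noteq> (x(q := v)) j} \<subseteq> {q}" by auto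
  from card_mono[OF _ this] show ?thesis unfolding hdist_def by simp
qed

lemma hdist_fun_upd_fun_upd:
  assumes "p \<in> {1..n}" "q \<in> {1..n}" "p \<noteq> q" "m p \<noteq> u" "m q \<noteq> v"
  shows "hdist n m (m(p := u, q := v)) = 2"
proof -
  have "{j \<in> {1..n}. m j \<noteq> (m(p := u, q := v)) j} = {p, q}" using assms by auto
  then show ?thesis unfolding hdist_def using assms(3) by simp
qed

lemma hdist_le_1_imp_fun_upd:
  assumes "x \<in> extensional {1..n}" "y \<in> extensional {1..n}" "hdist n x y \<le> 1"
  shows "y = x \<or> (\<exists>q\<in>{1..n}. y = x(q := y q))"
proof -
  let ?D = "{j \<in> {1..n}. x j \<noteq> y j}"
  have agree: "y j = x j" if "j \<notin> ?D" for j
    using that assms(1,2) by (cases "j \<in> {1..n}") (auto simp: extensional_def)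
  have "\<forall>p\<in>?D. \<forall>q\<in>?D. p = q"
    using assms(3) card_le_Suc0_iff_eq[of ?D] unfolding hdist_def by simp
  then consider "?D = {}" | q where "q \<in> ?D" "?D = {q}" by blast
  then show ?thesis
  proof cases
    case 1
    then have "y = x" using agree by (intro ext) blast
    then show ?thesis ..
  next
    case 2
    then have "y = x(q := y q)" using agree by (intro ext) (metis fun_upd_apply singletonD)
    then show ?thesis using 2 by blast
  qed
qed

lemma extensional_fun_upd: "f \<in> extensional A \<Longrightarrow> q \<in> A \<Longrightarrow> f(q := v) \<in> extensional A"
  unfolding extensional_def by auto

lemma switchable_extensional: "switchable n r S \<Longrightarrow> x \<in> S \<Longrightarrow> x \<in> extensional {1..n}"
  unfolding switchable_def grid_def by (auto simp: PiE_iff)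

lemma switchableD:
  assumes "switchable n r S" "x \<in> S" "y \<in> S" "hdist n x y = 2" "q \<in> {1..n}"
  shows "x(q := y q) \<in> S"
  using assms unfolding switchable_def sw_def by blast

lemma switchable_fun_upd_fun_upd:
  assumes "switchable n r S" "m \<in> S" "m(p := u, q := v) \<in> S"
    and "p \<in> {1..n}" "q \<in> {1..n}" "p \<noteq> q" "m p \<noteq> u" "m q \<noteq> v"
  shows "m(q := v) \<in> S"
  using switchableD[OF assms(1-3) hdist_fun_upd_fun_upd[OF assms(4-8)] assms(5)] by simp

lemma grid_step_fun_upd: "x \<in> S \<Longrightarrow> x(q := v) \<in> S \<Longrightarrow> grid_step n S x (x(q := v))"
  unfolding grid_step_def using hdist_fun_upd_le_1 by blast

lemma symp_grid_step: "symp (grid_step n S)"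
  unfolding grid_step_def by (auto intro: sympI simp: hdist_commute)

lemma component_subset: "a \<in> S \<Longrightarrow> component n S a \<subseteq> S"
proof
  fix b assume "a \<in> S" "b \<in> component n S a"
  then have "(grid_step n S)\<^sup>*\<^sup>* a b" "a \<in> S" unfolding component_def by simp_all
  then show "b \<in> S" by (induction rule: rtranclp_induct) (auto simp: grid_step_def)
qed

lemma component_fun_upd:
  "a \<in> S \<Longrightarrow> x \<in> component n S a \<Longrightarrow> x(q := v) \<in> S \<Longrightarrow> x(q := v) \<in> component n S a"
  using component_subset grid_step_fun_upd unfolding component_def
  by (metis mem_Collect_eq rtranclp.rtrancl_into_rtrancl subsetD)

lemma connected_sym: "(grid_step n S)\<^sup>*\<^sup>* x y \<Longrightarrow> (grid_step n S)\<^sup>*\<^sup>* y x"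
  using symp_rtranclp[OF symp_grid_step] by (rule sympD)

lemma component_connected:
  "b \<in> component n S a \<Longrightarrow> c \<in> component n S a \<Longrightarrow> (grid_step n S)\<^sup>*\<^sup>* b c"
  unfolding component_def by (blast intro: rtranclp_trans connected_sym)

lemma component_eq:
  assumes "b \<in> component n S a" "b \<in> component n S a'"
  shows "component n S a = component n S a'"
proof -
  have "(grid_step n S)\<^sup>*\<^sup>* a a'" "(grid_step n S)\<^sup>*\<^sup>* a' a"
    using assms unfolding component_def by (blast intro: rtranclp_trans connected_sym)+
  then show ?thesis unfolding component_def by (blast intro: rtranclp_trans)
qed

lemma conn_inD:
  assumes "conn_in n S a b"
  shows "a \<in> S" "(grid_step n S)\<^sup>*\<^sup>* a b"
proof -
  obtain k :: nat and f :: "nat \<Rightarrow> nat \<Rightarrow> nat" where f: "f 0 = a" "f k = b"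
    "\<forall>j\<le>k. f j \<in> S" "\<forall>j\<in>{1..k}. hdist n (f (j - 1)) (f j) \<le> 1"
    using assms unfolding conn_in_def by blast
  have "(grid_step n S)\<^sup>*\<^sup>* (f 0) (f i)" if "i \<le> k" for i
    using that
  proof (induction i)
    case (Suc i)
    have "hdist n (f (Suc i - 1)) (f (Suc i)) \<le> 1" using bspec[OF f(4), of "Suc i"] Suc.prems by simp
    then have "grid_step n S (f i) (f (Suc i))"
      using f(3) Suc.prems unfolding grid_step_def by simp
    with Suc show ?case by (meson Suc_leD rtranclp.rtrancl_into_rtrancl)
  qed simp
  then show "a \<in> S" "(grid_step n S)\<^sup>*\<^sup>* a b" using f by auto
qed

lemma conn_inI:
  assumes "(grid_step n S)\<^sup>*\<^sup>* a b" "a \<in> S"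
  shows "conn_in n S a b"
  using assms
proof (induction rule: rtranclp_induct)
  case base
  show ?case unfolding conn_in_def
    by (rule exI[of _ 0], rule exI[of _ "\<lambda>_. a"]) (use base in auto)
next
  case (step y z)
  then obtain k :: nat and f :: "nat \<Rightarrow> nat \<Rightarrow> nat" where f: "f 0 = a" "f k = y"
    "\<forall>j\<le>k. f j \<in> S" "\<forall>j\<in>{1..k}. hdist n (f (j - 1)) (f j) \<le> 1"
    unfolding conn_in_def by blast
  let ?g = "f(Suc k := z)"
  have "?g j \<in> S" if "j \<le> Suc k" for j
    using that f(3) step(2) unfolding grid_step_def by (cases "j = Suc k") auto
  moreover have "hdist n (?g (j - 1)) (?g j) \<le> 1" if "j \<in> {1..Suc k}" for j
  proof (cases "j = Suc k")
    case True
    then show ?thesis using f(2) step(2) unfolding grid_step_def by simp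
  next
    case False
    then show ?thesis using that f(4) by auto
  qed
  ultimately show ?case using f unfolding conn_in_def
    by (intro exI[of _ "Suc k"] exI[of _ ?g]) simp
qed

lemma conn_classes_eq: "conn_classes n S = component n S ` S"
proof -
  have "conn_in n S a b \<longleftrightarrow> a \<in> S \<and> (grid_step n S)\<^sup>*\<^sup>* a b" for a b
    using conn_inD conn_inI by blast
  then show ?thesis unfolding conn_classes_def quotient_def component_def by auto
qed

lemma box_fun_upd_mem:
  assumes sw: "switchable n r S" and box: "box n x y \<subseteq> S"
    and y': "y(q := v) \<in> S" and q: "q \<in> {1..n}" and v: "v \<noteq> y q"
    and "finite K" "m \<in> box n x y" "{j \<in> {1..n}. m j \<noteq> y j} \<subseteq> K" "m q = y q"
  shows "m(q := v) \<in> S"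
  using assms(6-)
proof (induction K arbitrary: m rule: finite_induct)
  case empty
  then have "m(q := v) = y(q := v)"
    using q switchable_extensional[OF sw y'] unfolding box_def
    by (intro extensionalityI[of _ "{1..n}"]) (auto simp: extensional_def)
  then show ?case using y' by (simp only:)
next
  case (insert p K m)
  show ?case
  proof (cases "p \<in> {1..n} \<and> m p \<noteq> y p")
    case False
    then show ?thesis using insert by blast
  next
    case True
    let ?m1 = "m(p := y p)"
    have pq: "p \<noteq> q" using True insert.prems(3) by auto
    have "?m1 \<in> box n x y" using insert.prems(1) True unfolding box_def extensional_def by auto
    moreover have "{j \<in> {1..n}. ?m1 j \<noteq> y j} \<subseteq> K" using insert.prems(2) by auto
    moreover have "?m1 q = y q" using insert.prems(3) pq by simp
    ultimately have "m(p := y p, q := v) \<in> S" using insert.IH by blast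
    moreover have "m \<in> S" using insert.prems(1) box by blast
    moreover have "m q \<noteq> v" using insert.prems(3) v by simp
    ultimately show ?thesis
      using switchable_fun_upd_fun_upd[OF sw _ _ _ q pq] True by blast
  qed
qed

lemma box_fun_upd_subset:
  assumes sw: "switchable n r S" and box: "box n x y \<subseteq> S"
    and y': "y(q := v) \<in> S" and q: "q \<in> {1..n}"
  shows "box n x (y(q := v)) \<subseteq> S"
proof
  fix z assume z: "z \<in> box n x (y(q := v))"
  show "z \<in> S"
  proof (cases "z q = v \<and> v \<noteq> y q")
    case True
    have z': "z(q := y q) \<in> box n x y"
      using z extensional_fun_upd[OF _ q] unfolding box_def by auto
    have "(z(q := y q))(q := v) \<in> S"
      by (rule box_fun_upd_mem[OF sw box y' q _ finite_atLeastAtMost[of 1 n] z']) (use True in auto)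
    then show ?thesis using True fun_upd_idem[of z q v] by simp
  next
    case False
    have "z j = x j \<or> z j = y j" if "j \<in> {1..n}" for j
      using z that False unfolding box_def by (cases "j = q") auto
    with z have "z \<in> box n x y" unfolding box_def by blast
    then show ?thesis using box by blast
  qed
qed

lemma box_subset_if_connected:
  assumes sw: "switchable n r S" and a: "a \<in> S" and ab: "(grid_step n S)\<^sup>*\<^sup>* a b"
  shows "box n a b \<subseteq> S"
  using ab
proof (induction rule: rtranclp_induct)
  case base
  have "box n a a \<subseteq> {a}"
    using switchable_extensional[OF sw a] unfolding box_def by (auto intro: extensionalityI)
  then show ?case using a by blast
next
  case (step y z)
  then have y: "y \<in> S" and z: "z \<in> S" and "hdist n y z \<le> 1" unfolding grid_step_def by auto
  from hdist_le_1_imp_fun_upd[OF switchable_extensional[OF sw y] switchable_extensional[OF sw z] this(3)]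
  show ?case
  proof
    assume "\<exists>q\<in>{1..n}. z = y(q := z q)"
    then obtain q where "q \<in> {1..n}" "z = y(q := z q)" by blast
    with box_fun_upd_subset[OF sw step.IH, of q "z q"] z show ?thesis by simp
  qed (use step.IH in simp)
qed

lemma component_fun_upd_coordinate:
  assumes sw: "switchable n r S" and a: "a \<in> S"
    and w: "w \<in> component n S a" and c: "c \<in> component n S a" and q: "q \<in> {1..n}"
  shows "w(q := c q) \<in> component n S a"
proof -
  have wS: "w \<in> S" using w component_subset[OF a] by blast
  have "box n w c \<subseteq> S" using box_subset_if_connected[OF sw wS component_connected[OF w c]] .
  moreover have "w(q := c q) \<in> box n w c"
    using extensional_fun_upd[OF switchable_extensional[OF sw wS] q] unfolding box_def by simp
  ultimately show ?thesis using component_fun_upd[OF a w] by blast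
qed

lemma component_eq_PiE:
  assumes sw: "switchable n r S" and a: "a \<in> S"
  shows "component n S a = PiE {1..n} (\<lambda>j. (\<lambda>x. x j) ` component n S a)"
    (is "?C = PiE {1..n} ?F")
proof
  show "?C \<subseteq> PiE {1..n} ?F"
  proof
    fix b assume b: "b \<in> ?C"
    then have "b \<in> extensional {1..n}"
      using component_subset[OF a] switchable_extensional[OF sw] by blast
    then show "b \<in> PiE {1..n} ?F" using b by (auto simp: PiE_iff)
  qed
next
  show "PiE {1..n} ?F \<subseteq> ?C"
  proof
    fix x assume x: "x \<in> PiE {1..n} ?F"
    have "finite K \<Longrightarrow> K \<subseteq> {1..n} \<Longrightarrow> (\<lambda>j. if j \<in> K then x j else a j) \<in> ?C" for K
    proof (induction K rule: finite_induct)
      case empty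
      then show ?case unfolding component_def by simp
    next
      case (insert q K)
      let ?w = "\<lambda>j. if j \<in> K then x j else a j"
      have w: "?w \<in> ?C" and q: "q \<in> {1..n}" using insert by auto
      have "x q \<in> ?F q" using x q by (rule PiE_mem)
      then obtain c where c: "c \<in> ?C" and xq: "x q = c q" by blast
      have "(\<lambda>j. if j \<in> insert q K then x j else a j) = ?w(q := c q)" using xq by auto
      then show ?case using component_fun_upd_coordinate[OF sw a w c q] by simp
    qed
    from this[of "{1..n}"] have "(\<lambda>j. if j \<in> {1..n} then x j else a j) \<in> ?C" by simp
    moreover have "(\<lambda>j. if j \<in> {1..n} then x j else a j) = x"
      using PiE_arb[OF x] extensional_arb[OF switchable_extensional[OF sw a]] by fastforce
    ultimately show "x \<in> ?C" by simp
  qed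
qed

lemma component_close_point_coordinate:
  assumes sw: "switchable n r S" and a: "a \<in> S" and b: "b \<in> component n S a"
    and b': "b' \<in> S" "b' \<notin> component n S a" and close: "hdist n b b' \<le> 2"
  shows "\<exists>q\<in>{1..n}. b q \<noteq> b' q \<and> b' q \<in> (\<lambda>x. x q) ` component n S a"
proof -
  have bS: "b \<in> S" using b component_subset[OF a] by blast
  have "\<not> grid_step n S b b'"
    using b b'(2) unfolding component_def by (meson mem_Collect_eq rtranclp.rtrancl_into_rtrancl)
  then have two: "hdist n b b' = 2" using bS b'(1) close unfolding grid_step_def by simp
  then have "{j \<in> {1..n}. b j \<noteq> b' j} \<noteq> {}" unfolding hdist_def by (metis card.empty zero_neq_numeral)
  then obtain q where q: "q \<in> {1..n}" "b q \<noteq> b' q" by blast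
  have "b(q := b' q) \<in> component n S a"
    using switchableD[OF sw bS b'(1) two q(1)] by (rule component_fun_upd[OF a b])
  then have "(b(q := b' q)) q \<in> (\<lambda>x. x q) ` component n S a" by (rule imageI)
  then show ?thesis using q by auto
qed

lemma component_projections_disjoint:
  assumes sw: "switchable n r S" and a: "a \<in> S" and a': "a' \<in> S"
    and ne: "component n S a \<noteq> component n S a'"
  shows "\<exists>P \<subseteq> {1..n}. 3 \<le> card P \<and>
    (\<forall>p\<in>P. (\<lambda>x. x p) ` component n S a \<inter> (\<lambda>x. x p) ` component n S a' = {})"
proof (rule ccontr)
  let ?C = "component n S a" and ?C' = "component n S a'"
  let ?F = "\<lambda>j. (\<lambda>x. x j) ` ?C" and ?F' = "\<lambda>j. (\<lambda>x. x j) ` ?C'"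
  define P where "P = {p \<in> {1..n}. ?F p \<inter> ?F' p = {}}"
  assume "\<not> ?thesis"
  moreover have "P \<subseteq> {1..n}" "\<forall>p\<in>P. ?F p \<inter> ?F' p = {}" unfolding P_def by auto
  ultimately have "\<not> 3 \<le> card P" by blast
  then have card_P: "card P \<le> 2" by simp
  define c where "c j = (SOME v. v \<in> ?F j \<inter> ?F' j)" for j
  have c: "c j \<in> ?F j" "c j \<in> ?F' j" if "j \<in> {1..n}" "j \<notin> P" for j
    using someI_ex[of "\<lambda>v. v \<in> ?F j \<inter> ?F' j"] that unfolding P_def c_def by auto
  have "a \<in> ?C" "a' \<in> ?C'" unfolding component_def by simp_all
  \<comment> \<open>Points of the two components that differ exactly in the coordinates P.\<close>
  define b where "b = (\<lambda>j\<in>{1..n}. if j \<in> P then a j else c j)"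
  define b' where "b' = (\<lambda>j\<in>{1..n}. if j \<in> P then a' j else c j)"
  have "b \<in> PiE {1..n} ?F" "b' \<in> PiE {1..n} ?F'"
    using \<open>a \<in> ?C\<close> \<open>a' \<in> ?C'\<close> c unfolding b_def b'_def by auto
  then have b: "b \<in> ?C" and b': "b' \<in> ?C'"
    using eqset_imp_iff[OF component_eq_PiE[OF sw a], of b]
      eqset_imp_iff[OF component_eq_PiE[OF sw a'], of b'] by blast+
  have "j \<in> P \<Longrightarrow> a j \<noteq> a' j" for j
    using \<open>a \<in> ?C\<close> \<open>a' \<in> ?C'\<close> unfolding P_def by blast
  then have diff: "{j \<in> {1..n}. b j \<noteq> b' j} = P"
    unfolding b_def b'_def P_def by auto
  have "b' \<in> S" using b' component_subset a' by blast
  moreover have "b' \<notin> ?C" using component_eq[OF _ b'] ne by blast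
  moreover have "hdist n b b' \<le> 2" using diff card_P unfolding hdist_def by simp
  ultimately obtain q where "q \<in> {1..n}" "b q \<noteq> b' q" "b' q \<in> ?F q"
    using component_close_point_coordinate[OF sw a b] by blast
  moreover have "b' q \<in> ?F' q" using b' by blast
  ultimately show False using diff unfolding P_def by blast
qed

theorem theorem5p1:
  fixes n :: nat and r :: "nat \<Rightarrow> nat" and S :: "(nat \<Rightarrow> nat) set"
  assumes "n > 0" and "\<forall>i\<in>{1..n}. r i > 0"
    and "switchable n r S"
  shows "\<exists>F :: (nat \<Rightarrow> nat) set \<Rightarrow> nat \<Rightarrow> nat set.
    (\<forall>T\<in>conn_classes n S. (\<forall>j\<in>{1..n}. F T j \<subseteq> {1..r j}) \<and> T = PiE {1..n} (F T)) \<and>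
    (\<forall>T\<in>conn_classes n S. \<forall>a\<in>T. \<forall>b\<in>grid n r. \<forall>j\<in>{1..n}.
        sw j a b \<in> S \<longrightarrow> sw j a b \<in> T) \<and>
    (\<forall>T\<in>conn_classes n S. \<forall>T'\<in>conn_classes n S. T \<noteq> T' \<longrightarrow>
        (\<exists>P \<subseteq> {1..n}. card P \<ge> 3 \<and> (\<forall>p\<in>P. F T p \<inter> F T' p = {})))"
proof (intro exI[of _ "\<lambda>T j. (\<lambda>x. x j) ` T"] conjI ballI impI)
  note sw = assms(3)
  fix T assume "T \<in> conn_classes n S"
  then obtain a where a: "a \<in> S" and T: "T = component n S a" unfolding conn_classes_eq by blast
  have grid: "T \<subseteq> grid n r" using component_subset[OF a] sw T unfolding switchable_def by blast
  show "(\<lambda>x. x j) ` T \<subseteq> {1..r j}" if "j \<in> {1..n}" for j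
  proof
    fix v assume "v \<in> (\<lambda>x. x j) ` T"
    then obtain x where "x \<in> grid n r" "v = x j" using grid by blast
    then show "v \<in> {1..r j}" using PiE_mem[of x "{1..n}" "\<lambda>i. {1..r i}" j] that unfolding grid_def by simp
  qed
  show "T = PiE {1..n} (\<lambda>j. (\<lambda>x. x j) ` T)" unfolding T by (rule component_eq_PiE[OF sw a])
  show "sw j x b \<in> T" if "x \<in> T" "sw j x b \<in> S" for x b j
    using that unfolding sw_def T by (rule component_fun_upd[OF a])
  fix T' assume "T' \<in> conn_classes n S" and ne: "T \<noteq> T'"
  then obtain a' where a': "a' \<in> S" and T': "T' = component n S a'" unfolding conn_classes_eq by blast
  show "\<exists>P \<subseteq> {1..n}. card P \<ge> 3 \<and> (\<forall>p\<in>P. (\<lambda>x. x p) ` T \<inter> (\<lambda>x. x p) ` T' = {})"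
    using component_projections_disjoint[OF sw a a'] ne unfolding T T' by simp
qed

end
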